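(* For any positive integer $K$, there exist constants $0\le\alpha<\beta\le1$ and a family $\mathcal{D}=\{D_p\}_{p\in[\alpha,\beta]}$ of probability distributions supported on $\{-R,\dots,R\}$, where $R=O(K^2)$, such that: (1) for every $D_p\in\mathcal{D}$, $D_p(0)=p$ and $D_p(1)=\Omega(1)$; (2) for all $p\in[\alpha,\beta]$ and all $X\in[R]$, $D_p(X)=D_p(-X)$; (3) for all $p,q\in[\alpha,\beta]$, $\mathbb{E}_{X\sim D_p}[X^k]=\mathbb{E}_{X\sim D_q}[X^k]$ for all $k\in[K]$.
   Context: $[K]=\{1,\dots,K\}$; $D_p(i)$ denotes the probability that $D_p$ assigns to $i$. *)

theory Defs
  imports "HOL-Probability.Probability_Mass_Function"
begin

end

theory Submission
  imports Defs
begin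

text \<open>
  Put mass 1/4 on each of \<open>\<pm>1\<close> and spread the remaining mass 1/2 as the binomial
  distribution of \<open>2n\<close> fair coin flips centred at 0. Then add \<open>t\<close> times the alternating
  binomial weights \<open>(-1)^(x+n) * (2n choose x+n)\<close>. These form a \<open>2n\<close>-th finite difference,
  so they annihilate every polynomial of degree \<open>< 2n\<close>: the total mass and all moments of
  order \<open>< 2n\<close> are unchanged, while the atom at 0 moves linearly in \<open>t\<close>. For
  \<open>|t| \<le> 1/(2 * 4^n)\<close> the perturbation is dominated by the binomial part, so the weights stay
  nonnegative, the atom at 1 stays at least 1/4, and the atom at 0 sweeps out
  \<open>[0, (2n choose n) / 4^n]\<close>. Take \<open>n = R = K\<close>.
\<close>

lemma sum_alternating_binomial_Suc:
  fixes f :: "nat \<Rightarrow> real"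
  shows "(\<Sum>i\<le>Suc m. (-1)^i * real (Suc m choose i) * f i) =
         (\<Sum>i\<le>m. (-1)^i * real (m choose i) * (f i - f (Suc i)))"
proof -
  have "(\<Sum>i\<le>Suc m. (-1)^i * real (Suc m choose i) * f i) =
        f 0 + (\<Sum>i\<le>m. (-1)^(Suc i) * real (Suc m choose Suc i) * f (Suc i))"
    by (subst sum.atMost_Suc_shift) simp
  also have "\<dots> = f 0 + (\<Sum>i\<le>m. (-1)^(Suc i) * real (m choose i) * f (Suc i))
                 + (\<Sum>i\<le>m. (-1)^(Suc i) * real (m choose Suc i) * f (Suc i))"
    unfolding add.assoc sum.distrib[symmetric]
    by (intro arg_cong[where f="\<lambda>t. f 0 + t"] sum.cong refl) (simp add: algebra_simps)
  also have "(\<Sum>i\<le>m. (-1)^(Suc i) * real (m choose Suc i) * f (Suc i))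
      = (\<Sum>i\<le>Suc m. (-1)^i * real (m choose i) * f i) - f 0"
    by (subst sum.atMost_Suc_shift) simp
  also have "(\<Sum>i\<le>Suc m. (-1)^i * real (m choose i) * f i) = (\<Sum>i\<le>m. (-1)^i * real (m choose i) * f i)"
    by simp
  finally show ?thesis
    by (simp add: sum_subtractf algebra_simps sum_negf)
qed

lemma sum_alternating_binomial_power_eq_0:
  fixes a :: real
  assumes "k < m"
  shows "(\<Sum>i\<le>m. (-1)^i * real (m choose i) * (real i + a)^k) = 0"
  using assms
proof (induction m arbitrary: k)
  case 0
  then show ?case by simp
next
  case (Suc m)
  have binomial_diff: "(x + 1)^k - x^k = (\<Sum>l<k. real (k choose l) * x^l)" for x :: real
  proof -
    have "(x + 1)^k = (\<Sum>l\<le>k. real (k choose l) * x^l)"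
      using binomial_ring[of x 1 k] by simp
    also have "\<dots> = (\<Sum>l<k. real (k choose l) * x^l) + x^k"
      by (simp flip: lessThan_Suc_atMost)
    finally show ?thesis by simp
  qed
  have "(\<Sum>i\<le>Suc m. (-1)^i * real (Suc m choose i) * (real i + a)^k)
     = (\<Sum>i\<le>m. (-1)^i * real (m choose i) * ((real i + a)^k - (real (Suc i) + a)^k))"
    by (rule sum_alternating_binomial_Suc)
  also have "\<dots> = - (\<Sum>i\<le>m. (-1)^i * real (m choose i) * (\<Sum>l<k. real (k choose l) * (real i + a)^l))"
    using binomial_diff[of "real _ + a"] by (simp add: sum_negf algebra_simps)
  also have "\<dots> = - (\<Sum>l<k. real (k choose l) * (\<Sum>i\<le>m. (-1)^i * real (m choose i) * (real i + a)^l))"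
    unfolding sum_distrib_left by (subst sum.swap) (simp add: algebra_simps)
  also have "\<dots> = 0"
    using Suc by simp
  finally show ?case .
qed

lemma sum_int_symmetric_interval:
  fixes g :: "int \<Rightarrow> 'a :: comm_monoid_add"
  shows "(\<Sum>x\<in>{- int n..int n}. g x) = (\<Sum>i\<le>2*n. g (int i - int n))"
  by (rule sum.reindex_bij_witness[where j="\<lambda>x. nat (x + int n)" and i="\<lambda>i. int i - int n"]) auto

definition centered_binomial :: "nat \<Rightarrow> int \<Rightarrow> real" where
  "centered_binomial n x = (if \<bar>x\<bar> \<le> int n then real (2*n choose nat (x + int n)) else 0)"

definition alternating_binomial :: "nat \<Rightarrow> int \<Rightarrow> real" where
  "alternating_binomial n x = (-1)^nat (x + int n) * centered_binomial n x"

lemma centered_binomial_nonneg: "centered_binomial n x \<ge> 0"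
  by (simp add: centered_binomial_def)

lemma centered_binomial_uminus: "centered_binomial n (- x) = centered_binomial n x"
proof (cases "\<bar>x\<bar> \<le> int n")
  case True
  then have "nat (- x + int n) = 2*n - nat (x + int n)" "nat (x + int n) \<le> 2*n"
    by simp_all
  then have "2*n choose nat (- x + int n) = 2*n choose nat (x + int n)"
    by (metis binomial_symmetric)
  then show ?thesis
    using True by (simp add: centered_binomial_def)
qed (simp add: centered_binomial_def)

lemma alternating_binomial_uminus: "alternating_binomial n (- x) = alternating_binomial n x"
proof (cases "\<bar>x\<bar> \<le> int n")
  case True
  then consider "nat (x + int n) = nat (- x + int n) + 2 * nat x"
    | "nat (- x + int n) = nat (x + int n) + 2 * nat (- x)"
    by linarith
  then have "(-1::real)^nat (- x + int n) = (-1)^nat (x + int n)"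
    by cases (simp_all add: power_add power_mult)
  then show ?thesis
    by (simp add: alternating_binomial_def centered_binomial_uminus)
qed (simp add: alternating_binomial_def centered_binomial_def)

lemma abs_alternating_binomial: "\<bar>alternating_binomial n x\<bar> = centered_binomial n x"
  by (simp add: alternating_binomial_def abs_mult centered_binomial_nonneg)

lemma sum_centered_binomial: "(\<Sum>x\<in>{- int n..int n}. centered_binomial n x) = 4^n"
proof -
  have "(\<Sum>x\<in>{- int n..int n}. centered_binomial n x) = (\<Sum>i\<le>2*n. real (2*n choose i))"
    unfolding sum_int_symmetric_interval by (intro sum.cong refl) (auto simp: centered_binomial_def)
  also have "\<dots> = 2^(2*n)"
    by (metis choose_row_sum of_nat_numeral of_nat_power of_nat_sum)
  finally show ?thesis
    by (simp add: power_mult)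
qed

lemma sum_alternating_binomial_moment:
  assumes "k < 2*n"
  shows "(\<Sum>x\<in>{- int n..int n}. alternating_binomial n x * real_of_int x ^ k) = 0"
proof -
  have "(\<Sum>x\<in>{- int n..int n}. alternating_binomial n x * real_of_int x ^ k)
     = (\<Sum>i\<le>2*n. (-1)^i * real (2*n choose i) * (real i + (- real n))^k)"
    unfolding sum_int_symmetric_interval
    by (intro sum.cong refl) (auto simp: alternating_binomial_def centered_binomial_def)
  also have "\<dots> = 0"
    using sum_alternating_binomial_power_eq_0[OF assms] .
  finally show ?thesis .
qed

definition central_binomial_prob :: "nat \<Rightarrow> real" where
  "central_binomial_prob n = real (2*n choose n) / 4^n"

lemma central_binomial_prob_pos: "central_binomial_prob n > 0"
  by (simp add: central_binomial_prob_def)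

lemma central_binomial_prob_le_1: "central_binomial_prob n \<le> 1"
proof -
  have "real (2*n choose n) \<le> 2^(2*n)"
    by (metis binomial_le_pow2 of_nat_le_iff of_nat_numeral of_nat_power)
  then show ?thesis
    by (simp add: central_binomial_prob_def power_mult)
qed

definition base_weight :: "nat \<Rightarrow> int \<Rightarrow> real" where
  "base_weight n x = (if \<bar>x\<bar> = 1 then 1/4 else 0) + centered_binomial n x / (2 * 4^n)"

definition moment_matching_weight :: "nat \<Rightarrow> real \<Rightarrow> int \<Rightarrow> real" where
  "moment_matching_weight n p x =
     base_weight n x + (p - base_weight n 0) / alternating_binomial n 0 * alternating_binomial n x"

lemma sum_base_weight:
  assumes "n \<ge> 1"
  shows "(\<Sum>x\<in>{- int n..int n}. base_weight n x) = 1"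
proof -
  have "{x \<in> {- int n..int n}. \<bar>x\<bar> = 1} = {-1, 1}"
    using assms by auto
  then have "(\<Sum>x\<in>{- int n..int n}. if \<bar>x\<bar> = 1 then 1/4 else 0) = (1/2 :: real)"
    by (simp add: sum.inter_filter[symmetric])
  then show ?thesis
    by (simp add: base_weight_def sum.distrib sum_divide_distrib[symmetric] sum_centered_binomial)
qed

lemma moment_matching_weight_0: "moment_matching_weight n p 0 = p"
  by (simp add: moment_matching_weight_def alternating_binomial_def centered_binomial_def)

lemma moment_matching_weight_ge:
  assumes "p \<in> {0..central_binomial_prob n}"
  shows "(if \<bar>x\<bar> = 1 then 1/4 else 0) \<le> moment_matching_weight n p x"
proof -
  define t where "t = (p - base_weight n 0) / alternating_binomial n 0"
  have "base_weight n 0 = real (2*n choose n) / (2 * 4^n)"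
    by (simp add: base_weight_def centered_binomial_def)
  with assms have "\<bar>p - base_weight n 0\<bar> \<le> real (2*n choose n) / (2 * 4^n)"
    by (simp add: central_binomial_prob_def abs_le_iff field_simps)
  then have "\<bar>t\<bar> \<le> 1 / (2 * 4^n)"
    by (simp add: t_def abs_divide abs_alternating_binomial centered_binomial_def field_simps)
  then have "\<bar>t\<bar> * centered_binomial n x \<le> 1 / (2 * 4^n) * centered_binomial n x"
    by (rule mult_right_mono[OF _ centered_binomial_nonneg])
  then have "\<bar>t * alternating_binomial n x\<bar> \<le> centered_binomial n x / (2 * 4^n)"
    by (simp add: abs_mult abs_alternating_binomial)
  then have "- (centered_binomial n x / (2 * 4^n)) \<le> t * alternating_binomial n x"
    by linarith
  then show ?thesis
    unfolding moment_matching_weight_def t_def[symmetric] unfolding base_weight_def by linarith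
qed

lemma moment_matching_weight_nonneg:
  assumes "p \<in> {0..central_binomial_prob n}"
  shows "moment_matching_weight n p x \<ge> 0"
  by (rule order_trans[OF _ moment_matching_weight_ge[OF assms]]) simp

lemma moment_matching_weight_eq_0:
  assumes "n \<ge> 1" "x \<notin> {- int n..int n}"
  shows "moment_matching_weight n p x = 0"
  using assms
  by (auto simp: moment_matching_weight_def base_weight_def alternating_binomial_def centered_binomial_def)

lemma moment_matching_weight_uminus: "moment_matching_weight n p (- x) = moment_matching_weight n p x"
  by (simp add: moment_matching_weight_def base_weight_def centered_binomial_uminus
      alternating_binomial_uminus)

lemma sum_moment_matching_weight_power:
  assumes "k < 2*n"
  shows "(\<Sum>x\<in>{- int n..int n}. real_of_int x ^ k * moment_matching_weight n p x)
       = (\<Sum>x\<in>{- int n..int n}. real_of_int x ^ k * base_weight n x)"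
proof -
  define t where "t = (p - base_weight n 0) / alternating_binomial n 0"
  have "(\<Sum>x\<in>{- int n..int n}. real_of_int x ^ k * moment_matching_weight n p x)
      = (\<Sum>x\<in>{- int n..int n}. real_of_int x ^ k * base_weight n x)
        + t * (\<Sum>x\<in>{- int n..int n}. alternating_binomial n x * real_of_int x ^ k)"
    by (simp add: moment_matching_weight_def t_def sum.distrib sum_distrib_left algebra_simps)
  then show ?thesis
    using sum_alternating_binomial_moment[OF assms] by simp
qed

lemma sum_moment_matching_weight:
  assumes "n \<ge> 1"
  shows "(\<Sum>x\<in>{- int n..int n}. moment_matching_weight n p x) = 1"
  using sum_moment_matching_weight_power[of 0 n p] sum_base_weight assms by simp

definition moment_matching_pmf :: "nat \<Rightarrow> real \<Rightarrow> int pmf" where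
  "moment_matching_pmf n p = embed_pmf (moment_matching_weight n p)"

lemma pmf_moment_matching_pmf:
  assumes "n \<ge> 1" "p \<in> {0..central_binomial_prob n}"
  shows "pmf (moment_matching_pmf n p) x = moment_matching_weight n p x"
proof -
  have nonneg: "\<And>x. moment_matching_weight n p x \<ge> 0"
    using moment_matching_weight_nonneg[OF assms(2)] .
  have "(\<integral>\<^sup>+x. ennreal (moment_matching_weight n p x) \<partial>count_space UNIV)
      = (\<Sum>x\<in>{- int n..int n}. ennreal (moment_matching_weight n p x))"
    by (rule nn_integral_count_space') (simp_all add: moment_matching_weight_eq_0[OF assms(1)])
  also have "\<dots> = 1"
    using nonneg by (simp add: sum_ennreal sum_moment_matching_weight[OF assms(1)])
  finally show ?thesis
    unfolding moment_matching_pmf_def using nonneg by (simp add: pmf_embed_pmf)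
qed

lemma set_pmf_moment_matching_pmf:
  assumes "n \<ge> 1" "p \<in> {0..central_binomial_prob n}"
  shows "set_pmf (moment_matching_pmf n p) \<subseteq> {- int n..int n}"
proof
  fix x
  assume "x \<in> set_pmf (moment_matching_pmf n p)"
  then have "moment_matching_weight n p x \<noteq> 0"
    by (simp add: set_pmf_eq pmf_moment_matching_pmf[OF assms])
  then show "x \<in> {- int n..int n}"
    using moment_matching_weight_eq_0[OF assms(1)] by blast
qed

lemma pmf_moment_matching_pmf_0:
  assumes "n \<ge> 1" "p \<in> {0..central_binomial_prob n}"
  shows "pmf (moment_matching_pmf n p) 0 = p"
  by (simp add: pmf_moment_matching_pmf[OF assms] moment_matching_weight_0)

lemma pmf_moment_matching_pmf_1_ge:
  assumes "n \<ge> 1" "p \<in> {0..central_binomial_prob n}"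
  shows "pmf (moment_matching_pmf n p) 1 \<ge> 1/4"
  using moment_matching_weight_ge[OF assms(2), of 1] by (simp add: pmf_moment_matching_pmf[OF assms])

lemma pmf_moment_matching_pmf_uminus:
  assumes "n \<ge> 1" "p \<in> {0..central_binomial_prob n}"
  shows "pmf (moment_matching_pmf n p) (- x) = pmf (moment_matching_pmf n p) x"
  by (simp add: pmf_moment_matching_pmf[OF assms] moment_matching_weight_uminus)

lemma expectation_power_moment_matching_pmf:
  assumes "n \<ge> 1" "p \<in> {0..central_binomial_prob n}" "k < 2*n"
  shows "measure_pmf.expectation (moment_matching_pmf n p) (\<lambda>x. real_of_int x ^ k)
       = (\<Sum>x\<in>{- int n..int n}. real_of_int x ^ k * base_weight n x)"
proof -
  have "measure_pmf.expectation (moment_matching_pmf n p) (\<lambda>x. real_of_int x ^ k)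
      = (\<Sum>x\<in>{- int n..int n}. real_of_int x ^ k * pmf (moment_matching_pmf n p) x)"
    using set_pmf_moment_matching_pmf[OF assms(1,2)] by (intro integral_measure_pmf_real) auto
  then show ?thesis
    by (simp add: pmf_moment_matching_pmf[OF assms(1,2)] sum_moment_matching_weight_power[OF assms(3)])
qed

theorem mainTheorem6:
  shows "\<exists>C c::real. C > 0 \<and> c > 0 \<and>
    (\<forall>K::nat. K \<ge> 1 \<longrightarrow>
      (\<exists>(\<alpha>::real) (\<beta>::real) (R::nat) (D::real \<Rightarrow> int pmf).
         0 \<le> \<alpha> \<and> \<alpha> < \<beta> \<and> \<beta> \<le> 1 \<and>
         real R \<le> C * (real K)^2 \<and>
         (\<forall>p\<in>{\<alpha>..\<beta>}. set_pmf (D p) \<subseteq> {- int R..int R}) \<and>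
         (\<forall>p\<in>{\<alpha>..\<beta>}. pmf (D p) 0 = p \<and> pmf (D p) 1 \<ge> c) \<and>
         (\<forall>p\<in>{\<alpha>..\<beta>}. \<forall>X\<in>{1..int R}. pmf (D p) X = pmf (D p) (- X)) \<and>
         (\<forall>p\<in>{\<alpha>..\<beta>}. \<forall>q\<in>{\<alpha>..\<beta>}. \<forall>k\<in>{1..K}.
            measure_pmf.expectation (D p) (\<lambda>X. real_of_int X ^ k) =
            measure_pmf.expectation (D q) (\<lambda>X. real_of_int X ^ k))))"
proof (rule exI[of _ 1], rule exI[of _ "1/4"], intro conjI allI impI)
  fix K :: nat
  assume K: "K \<ge> 1"
  show "\<exists>\<alpha> \<beta> R D. 0 \<le> \<alpha> \<and> \<alpha> < \<beta> \<and> \<beta> \<le> 1 \<and> real R \<le> 1 * real K ^ 2 \<and>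
         (\<forall>p\<in>{\<alpha>..\<beta>}. set_pmf (D p) \<subseteq> {- int R..int R}) \<and>
         (\<forall>p\<in>{\<alpha>..\<beta>}. pmf (D p) 0 = p \<and> pmf (D p) 1 \<ge> 1/4) \<and>
         (\<forall>p\<in>{\<alpha>..\<beta>}. \<forall>X\<in>{1..int R}. pmf (D p) X = pmf (D p) (- X)) \<and>
         (\<forall>p\<in>{\<alpha>..\<beta>}. \<forall>q\<in>{\<alpha>..\<beta>}. \<forall>k\<in>{1..K}.
            measure_pmf.expectation (D p) (\<lambda>X. real_of_int X ^ k) =
            measure_pmf.expectation (D q) (\<lambda>X. real_of_int X ^ k))"
  proof (rule exI[of _ 0], rule exI[of _ "central_binomial_prob K"], rule exI[of _ K],
      rule exI[of _ "moment_matching_pmf K"], intro conjI ballI)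
    show "real K \<le> 1 * real K ^ 2"
      using K by (simp add: power2_eq_square)
  next
    fix p
    assume "p \<in> {0..central_binomial_prob K}"
    with K show "pmf (moment_matching_pmf K p) 1 \<ge> 1/4"
      by (rule pmf_moment_matching_pmf_1_ge)
  next
    fix p q k
    assume "p \<in> {0..central_binomial_prob K}" "q \<in> {0..central_binomial_prob K}" "k \<in> {1..K}"
    with K show "measure_pmf.expectation (moment_matching_pmf K p) (\<lambda>X. real_of_int X ^ k) =
        measure_pmf.expectation (moment_matching_pmf K q) (\<lambda>X. real_of_int X ^ k)"
      by (simp add: expectation_power_moment_matching_pmf)
  qed (use K in \<open>auto simp: central_binomial_prob_pos central_binomial_prob_le_1 set_pmf_moment_matching_pmf
        pmf_moment_matching_pmf_0 pmf_moment_matching_pmf_uminus\<close>)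
qed simp_all

end
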